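(* Let $V$ be a braided vector space of diagonal type over a field $F$ of characteristic zero with basis $x_1,\dots,x_n$ and braiding $C(x_i\otimes x_j)=p_{i,j}x_j\otimes x_i$, and let $\mathfrak B(V)$ be its Nichols algebra. The following are equivalent: (1) $\mathfrak L(V)=\mathfrak L(V)_L$; (2) $\mathfrak L(V)=\mathfrak L^-(V)$; (3) $p_{i,i}^2=1$ for all $i$ and $p_{i,j}=p_{j,i}=1$ for all $1\le i\ne j\le n$. In this case $\mathfrak L(V)=\mathfrak L(V)_L=V$.
   Context: $\mathfrak B(V)=T(V)/\bigoplus_{m\ge2}\ker S_m$ is $\mathbb Z^n$-graded with $\deg x_i=e_i$; for homogeneous $u,v$ with $\deg u=\sum a_ie_i$, $\deg v=\sum b_je_j$ put $p_{u,v}=\prod p_{i,j}^{a_ib_j}$. $\mathfrak L(V)$ is the smallest subspace of $\mathfrak B(V)$ containing $V$ and closed under the braided bracket $[u,v]=uv-p_{u,v}vu$ (homogeneous $u,v$, extended bilinearly). $\mathfrak L(V)_L$ is the Lie subalgebra of $\mathfrak B(V)$ generated by $V$ under $[u,v]_L=p_{v,u}uv-p_{u,v}vu$, and $\mathfrak L^-(V)$ the Lie subalgebra generated by $V$ under the commutator $[u,v]^-=uv-vu$. *)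

theory Defs
  imports Main "HOL-Combinatorics.Permutations"
begin

text \<open>Tensor algebra T(V) on the basis x_0,...,x_{n-1} (indices shifted by one):
  an element is a finitely supported coefficient function on words (lists of
  letters < n), the word [i1,...,im] standing for x_i1 x_i2 ... x_im.\<close>

definition tensor :: "nat \<Rightarrow> (nat list \<Rightarrow> 'a::field) \<Rightarrow> bool" where
  "tensor n u \<longleftrightarrow> finite {w. u w \<noteq> 0} \<and> (\<forall>w. u w \<noteq> 0 \<longrightarrow> set w \<subseteq> {..<n})"

definition tmul :: "(nat list \<Rightarrow> 'a::field) \<Rightarrow> (nat list \<Rightarrow> 'a) \<Rightarrow> nat list \<Rightarrow> 'a" where
  "tmul u v = (\<lambda>w. \<Sum>k\<le>length w. u (take k w) * v (drop k w))"

definition tadd :: "(nat list \<Rightarrow> 'a::field) \<Rightarrow> (nat list \<Rightarrow> 'a) \<Rightarrow> nat list \<Rightarrow> 'a" where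
  "tadd u v = (\<lambda>w. u w + v w)"

definition tsmult :: "'a::field \<Rightarrow> (nat list \<Rightarrow> 'a) \<Rightarrow> nat list \<Rightarrow> 'a" where
  "tsmult c u = (\<lambda>w. c * u w)"

definition tdiff :: "(nat list \<Rightarrow> 'a::field) \<Rightarrow> (nat list \<Rightarrow> 'a) \<Rightarrow> nat list \<Rightarrow> 'a" where
  "tdiff u v = (\<lambda>w. u w - v w)"

definition gen :: "nat \<Rightarrow> nat list \<Rightarrow> 'a::field" where
  "gen i = (\<lambda>w. if w = [i] then 1 else 0)"

definition Vsp :: "nat \<Rightarrow> (nat list \<Rightarrow> 'a::field) set" where
  "Vsp n = {(\<lambda>w. \<Sum>i<n. c i * gen i w) | c. True}"

definition homog :: "nat \<Rightarrow> (nat \<Rightarrow> nat) \<Rightarrow> (nat list \<Rightarrow> 'a::field) \<Rightarrow> bool" where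
  "homog n \<alpha> u \<longleftrightarrow> tensor n u \<and> (\<forall>w. u w \<noteq> 0 \<longrightarrow> (\<forall>i. count_list w i = \<alpha> i))"

definition pchar :: "nat \<Rightarrow> (nat \<Rightarrow> nat \<Rightarrow> 'a::field) \<Rightarrow> (nat \<Rightarrow> nat) \<Rightarrow> (nat \<Rightarrow> nat) \<Rightarrow> 'a" where
  "pchar n p \<alpha> \<beta> = (\<Prod>i<n. \<Prod>j<n. p i j ^ (\<alpha> i * \<beta> j))"

text \<open>Quantum symmetrizer S_m for the diagonal braiding c(x_i x_j) = p_ij x_j x_i:
  S_m = sum over sigma in S_m of the Matsumoto lift T_sigma; T_sigma moves the letter in
  position a to position sigma a, with a factor p_{w_a,w_b} for every inversion a<b,
  sigma a > sigma b.  symc w w' is the coefficient of the word w' in S_m(w).\<close>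
definition symc :: "(nat \<Rightarrow> nat \<Rightarrow> 'a::field) \<Rightarrow> nat list \<Rightarrow> nat list \<Rightarrow> 'a" where
  "symc p w w' = (\<Sum>\<sigma>\<in>{\<sigma>. \<sigma> permutes {..<length w}}.
      if length w' = length w \<and> (\<forall>a<length w. w' ! (\<sigma> a) = w ! a)
      then (\<Prod>(a,b)\<in>{(a,b). a < b \<and> b < length w \<and> \<sigma> b < \<sigma> a}. p (w ! a) (w ! b))
      else 0)"

definition qsym :: "(nat \<Rightarrow> nat \<Rightarrow> 'a::field) \<Rightarrow> (nat list \<Rightarrow> 'a) \<Rightarrow> nat list \<Rightarrow> 'a" where
  "qsym p u = (\<lambda>w'. \<Sum>w\<in>{w. u w \<noteq> 0}. u w * symc p w w')"

definition comp :: "nat \<Rightarrow> (nat list \<Rightarrow> 'a::field) \<Rightarrow> nat list \<Rightarrow> 'a" where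
  "comp m u = (\<lambda>w. if length w = m then u w else 0)"

text \<open>The defining ideal  I = direct sum over m >= 2 of ker S_m,  so B(V) = T(V)/I.\<close>
definition nichols_ideal :: "nat \<Rightarrow> (nat \<Rightarrow> nat \<Rightarrow> 'a::field) \<Rightarrow> (nat list \<Rightarrow> 'a) set" where
  "nichols_ideal n p = {u. tensor n u \<and> (\<forall>w. length w < 2 \<longrightarrow> u w = 0)
      \<and> (\<forall>m\<ge>2. qsym p (comp m u) = (\<lambda>_. 0))}"

text \<open>Subspaces of B(V) are represented by their preimages in T(V) (subspaces containing I).
  closure n p br = preimage of the smallest subspace of B(V) containing V and closed under the
  bracket br (applied to homogeneous elements of degrees alpha, beta).\<close>
inductive_set closure_br :: "nat \<Rightarrow> (nat \<Rightarrow> nat \<Rightarrow> 'a::field)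
    \<Rightarrow> ((nat \<Rightarrow> nat) \<Rightarrow> (nat \<Rightarrow> nat) \<Rightarrow> (nat list \<Rightarrow> 'a) \<Rightarrow> (nat list \<Rightarrow> 'a) \<Rightarrow> nat list \<Rightarrow> 'a)
    \<Rightarrow> (nat list \<Rightarrow> 'a) set"
  for n p br where
  gen_in: "v \<in> Vsp n \<Longrightarrow> v \<in> closure_br n p br"
| ideal_in: "u \<in> nichols_ideal n p \<Longrightarrow> u \<in> closure_br n p br"
| add_in: "u \<in> closure_br n p br \<Longrightarrow> v \<in> closure_br n p br \<Longrightarrow> tadd u v \<in> closure_br n p br"
| smult_in: "u \<in> closure_br n p br \<Longrightarrow> tsmult c u \<in> closure_br n p br"
| br_in: "u \<in> closure_br n p br \<Longrightarrow> v \<in> closure_br n p br \<Longrightarrow> homog n \<alpha> u \<Longrightarrow> homog n \<beta> v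
          \<Longrightarrow> br \<alpha> \<beta> u v \<in> closure_br n p br"

definition braided_br where
  "braided_br n p = (\<lambda>\<alpha> \<beta> u v. tdiff (tmul u v) (tsmult (pchar n p \<alpha> \<beta>) (tmul v u)))"

definition L_br where
  "L_br n p = (\<lambda>\<alpha> \<beta> u v. tdiff (tsmult (pchar n p \<beta> \<alpha>) (tmul u v)) (tsmult (pchar n p \<alpha> \<beta>) (tmul v u)))"

definition comm_br where
  "comm_br = (\<lambda>\<alpha> \<beta> u v. tdiff (tmul u v) (tmul v u))"

definition LV where "LV n p = closure_br n p (braided_br n p)"
definition LV_L where "LV_L n p = closure_br n p (L_br n p)"
definition LV_minus where "LV_minus n p = closure_br n p comm_br"

definition V_mod where
  "V_mod n p = {tadd v u | v u. v \<in> Vsp n \<and> u \<in> nichols_ideal n p}"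

end

theory Submission
  imports Defs
begin

text \<open>Everything is decided in degree two. There the defining ideal \<open>I\<close> of the Nichols algebra
  is cut out by \<open>z(x\<^sub>ix\<^sub>j) + p\<^sub>j\<^sub>i z(x\<^sub>jx\<^sub>i) = 0\<close>, and a bracket of homogeneous elements only
  sees their components of degree one, so modulo \<open>I\<close> each of the three closures is spanned in
  degree two by the brackets of pairs of generators. Testing the brackets \<open>[x\<^sub>i, x\<^sub>j]\<close> of one
  kind against linear forms that vanish on the closure of another kind yields \<open>p\<^sub>i\<^sub>j = p\<^sub>j\<^sub>i = 1\<close>
  for \<open>i \<noteq> j\<close> and \<open>p\<^sub>i\<^sub>i\<^sup>2 = 1\<close>.

  Conversely, under these conditions all brackets of generators lie in \<open>I\<close>. Since \<open>I\<close> is a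
  two-sided ideal (the recursion \<open>S\<^sub>m\<^sub>+\<^sub>1 = (S\<^sub>m \<otimes> id) (1 + c\<^sub>m + c\<^sub>m c\<^sub>m\<^sub>-\<^sub>1 + \<dots>)\<close> shows that the
  kernel of the symmetrizers is stable under right multiplication by generators, and reversing
  words handles the left side), \<open>V + I\<close> is closed under every bracket, and all three closures
  equal \<open>V + I\<close>.\<close>

section \<open>The quantum symmetrizer\<close>

definition inversions :: "nat \<Rightarrow> (nat \<Rightarrow> nat) \<Rightarrow> (nat \<times> nat) set" where
  "inversions m \<sigma> = {(a, b). a < b \<and> b < m \<and> \<sigma> b < \<sigma> a}"

definition matsumoto_coeff :: "(nat \<Rightarrow> nat \<Rightarrow> 'a::field) \<Rightarrow> (nat \<Rightarrow> nat) \<Rightarrow> nat list \<Rightarrow> nat list \<Rightarrow> 'a" where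
  "matsumoto_coeff p \<sigma> w w' =
     (if length w' = length w \<and> (\<forall>a<length w. w' ! \<sigma> a = w ! a)
      then \<Prod>(a, b)\<in>inversions (length w) \<sigma>. p (w ! a) (w ! b) else 0)"

lemma symc_eq_sum_matsumoto_coeff:
  "symc p w w' = (\<Sum>\<sigma> | \<sigma> permutes {..<length w}. matsumoto_coeff p \<sigma> w w')"
  unfolding symc_def matsumoto_coeff_def inversions_def by (rule refl)

lemma finite_inversions: "finite (inversions m \<sigma>)"
  by (rule finite_subset[of _ "{..<m} \<times> {..<m}"]) (auto simp: inversions_def)

definition drop_nth :: "nat \<Rightarrow> 'b list \<Rightarrow> 'b list" where
  "drop_nth k xs = take k xs @ drop (Suc k) xs"

lemma length_drop_nth: "k < length xs \<Longrightarrow> length (drop_nth k xs) = length xs - 1"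
  by (simp add: drop_nth_def)

lemma nth_drop_nth:
  "k < length xs \<Longrightarrow> t < length xs - 1 \<Longrightarrow> drop_nth k xs ! t = (if t < k then xs ! t else xs ! Suc t)"
  by (auto simp: drop_nth_def nth_append min_def)

text \<open>A permutation \<sigma> of \<open>{..m}\<close> is a permutation \<tau> of \<open>{..<m}\<close> together with the value \<open>k = \<sigma> m\<close>.\<close>

definition perm_insert :: "nat \<Rightarrow> nat \<Rightarrow> (nat \<Rightarrow> nat) \<Rightarrow> nat \<Rightarrow> nat" where
  "perm_insert m k \<tau> = (\<lambda>a. if a < m then (if \<tau> a < k then \<tau> a else Suc (\<tau> a)) else if a = m then k else a)"

definition perm_remove :: "nat \<Rightarrow> nat \<Rightarrow> (nat \<Rightarrow> nat) \<Rightarrow> nat \<Rightarrow> nat" where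
  "perm_remove m k \<sigma> = (\<lambda>a. if a < m then (if \<sigma> a < k then \<sigma> a else \<sigma> a - 1) else a)"

lemma perm_insert_permutes:
  assumes \<tau>: "\<tau> permutes {..<m}" and k: "k \<le> m"
  shows "perm_insert m k \<tau> permutes {..<Suc m}"
proof (rule inj_imp_permutes)
  have lt: "\<And>a. a < m \<Longrightarrow> \<tau> a < m" using permutes_in_image[OF \<tau>] by auto
  have inj: "\<And>a b. \<tau> a = \<tau> b \<Longrightarrow> a = b" using permutes_inj[OF \<tau>] by (auto dest: injD)
  show "inj_on (perm_insert m k \<tau>) {..<Suc m}"
  proof (rule inj_onI)
    fix a b assume a: "a \<in> {..<Suc m}" and b: "b \<in> {..<Suc m}"
      and eq: "perm_insert m k \<tau> a = perm_insert m k \<tau> b"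
    consider "a < m" "b < m" | "a = m" "b < m" | "a < m" "b = m" | "a = m" "b = m"
      using a b by fastforce
    then show "a = b"
    proof cases
      case 1
      then show ?thesis using eq inj[of a b] by (simp add: perm_insert_def split: if_splits)
    qed (use eq in \<open>simp_all add: perm_insert_def split: if_splits\<close>)
  qed
  show "perm_insert m k \<tau> x \<in> {..<Suc m}" if "x \<in> {..<Suc m}" for x
    using that lt[of x] k by (auto simp: perm_insert_def)
qed (auto simp: perm_insert_def)

lemma perm_remove_permutes:
  assumes \<sigma>: "\<sigma> permutes {..<Suc m}" and k: "\<sigma> m = k"
  shows "perm_remove m k \<sigma> permutes {..<m}"
proof (rule inj_imp_permutes)
  have lt: "\<And>a. a < Suc m \<Longrightarrow> \<sigma> a < Suc m" using permutes_in_image[OF \<sigma>] by auto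
  have inj: "\<And>a b. \<sigma> a = \<sigma> b \<Longrightarrow> a = b" using permutes_inj[OF \<sigma>] by (auto dest: injD)
  have ne: "\<And>a. a < m \<Longrightarrow> \<sigma> a \<noteq> k" using inj k by force
  show "inj_on (perm_remove m k \<sigma>) {..<m}"
  proof (rule inj_onI)
    fix a b assume "a \<in> {..<m}" "b \<in> {..<m}" "perm_remove m k \<sigma> a = perm_remove m k \<sigma> b"
    then show "a = b" using ne[of a] ne[of b] inj[of a b] by (auto simp: perm_remove_def split: if_splits)
  qed
  show "perm_remove m k \<sigma> x \<in> {..<m}" if "x \<in> {..<m}" for x
    using that lt[of x] lt[of m] ne[of x] k by (auto simp: perm_remove_def)
qed (auto simp: perm_remove_def)

lemma perm_insert_remove:
  assumes \<sigma>: "\<sigma> permutes {..<Suc m}" and k: "\<sigma> m = k"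
  shows "perm_insert m k (perm_remove m k \<sigma>) = \<sigma>"
proof
  fix a
  have "\<sigma> a \<noteq> k" if "a < m" using permutes_inj[OF \<sigma>] k that by (auto dest: injD)
  moreover have "\<sigma> a = a" if "a \<ge> Suc m" using permutes_not_in[OF \<sigma>] that by auto
  ultimately show "perm_insert m k (perm_remove m k \<sigma>) a = \<sigma> a"
    using k by (auto simp: perm_insert_def perm_remove_def)
qed

lemma perm_remove_insert:
  assumes "\<tau> permutes {..<m}"
  shows "perm_remove m k (perm_insert m k \<tau>) = \<tau>"
proof
  fix a
  have "\<tau> a = a" if "a \<ge> m" using permutes_not_in[OF assms] that by auto
  then show "perm_remove m k (perm_insert m k \<tau>) a = \<tau> a"
    by (auto simp: perm_insert_def perm_remove_def)
qed

lemma inversions_perm_insert: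
  assumes \<tau>: "\<tau> permutes {..<m}"
  shows "inversions (Suc m) (perm_insert m k \<tau>)
           = inversions m \<tau> \<union> (\<lambda>a. (a, m)) ` {a. a < m \<and> k \<le> \<tau> a}"
proof (rule set_eqI)
  fix x :: "nat \<times> nat"
  obtain a b where x: "x = (a, b)" by (cases x)
  have lt: "\<And>a. a < m \<Longrightarrow> \<tau> a < m" using permutes_in_image[OF \<tau>] by auto
  show "x \<in> inversions (Suc m) (perm_insert m k \<tau>) \<longleftrightarrow>
        x \<in> inversions m \<tau> \<union> (\<lambda>a. (a, m)) ` {a. a < m \<and> k \<le> \<tau> a}"
  proof (cases "b < m")
    case True
    then show ?thesis using x lt[of a] lt[of b] by (auto simp: inversions_def perm_insert_def)
  next
    case False
    then show ?thesis using x lt[of a] by (auto simp: inversions_def perm_insert_def less_Suc_eq)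
  qed
qed

lemma prod_greaterThan_atMost_perm:
  assumes \<tau>: "\<tau> permutes {..<m}"
  shows "(\<Prod>l\<in>{k<..m}. f l) = (\<Prod>a | a < m \<and> k \<le> \<tau> a. f (Suc (\<tau> a)))"
proof -
  have lt: "\<And>a. a < m \<Longrightarrow> \<tau> a < m" using permutes_in_image[OF \<tau>] by auto
  have img: "(\<lambda>a. Suc (\<tau> a)) ` {a. a < m \<and> k \<le> \<tau> a} = {k<..m}"
  proof
    show "(\<lambda>a. Suc (\<tau> a)) ` {a. a < m \<and> k \<le> \<tau> a} \<subseteq> {k<..m}"
      using lt by (auto simp: Suc_le_eq)
    show "{k<..m} \<subseteq> (\<lambda>a. Suc (\<tau> a)) ` {a. a < m \<and> k \<le> \<tau> a}"
    proof
      fix l assume l: "l \<in> {k<..m}"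
      then have "l - 1 \<in> \<tau> ` {..<m}" using permutes_image[OF \<tau>] by auto
      then obtain a where "a < m" "\<tau> a = l - 1" by auto
      with l show "l \<in> (\<lambda>a. Suc (\<tau> a)) ` {a. a < m \<and> k \<le> \<tau> a}"
        by (intro image_eqI[of _ _ a]) auto
    qed
  qed
  have "inj_on (\<lambda>a. Suc (\<tau> a)) {a. a < m \<and> k \<le> \<tau> a}"
    using permutes_inj[OF \<tau>] by (auto simp: inj_on_def dest: injD)
  then show ?thesis unfolding img[symmetric] by (subst prod.reindex) simp_all
qed

lemma matsumoto_coeff_perm_insert:
  assumes \<tau>: "\<tau> permutes {..<m}" and k: "k \<le> m" and w: "length w = m"
  shows "matsumoto_coeff p (perm_insert m k \<tau>) (w @ [i]) w'
       = (if length w' = Suc m \<and> w' ! k = i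
          then (\<Prod>l\<in>{k<..m}. p (w' ! l) i) * matsumoto_coeff p \<tau> w (drop_nth k w') else 0)"
proof (cases "length w' = Suc m")
  case False
  then show ?thesis using w by (simp add: matsumoto_coeff_def)
next
  case w': True
  define \<sigma> where "\<sigma> = perm_insert m k \<tau>"
  define d where "d = drop_nth k w'"
  have lt: "\<And>a. a < m \<Longrightarrow> \<tau> a < m" using permutes_in_image[OF \<tau>] by auto
  have d: "length d = m" "\<And>t. t < m \<Longrightarrow> d ! t = (if t < k then w' ! t else w' ! Suc t)"
    using w' k by (simp_all add: d_def length_drop_nth nth_drop_nth)
  have wi: "\<And>a. a < m \<Longrightarrow> (w @ [i]) ! a = w ! a" "(w @ [i]) ! m = i"
    using w by (auto simp: nth_append)
  have \<sigma>d: "\<And>a. a < m \<Longrightarrow> w' ! \<sigma> a = d ! \<tau> a" using d(2) lt by (auto simp: \<sigma>_def perm_insert_def)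
  have cond: "(\<forall>a<Suc m. w' ! \<sigma> a = (w @ [i]) ! a) \<longleftrightarrow> w' ! k = i \<and> (\<forall>a<m. d ! \<tau> a = w ! a)"
    using \<sigma>d wi by (auto simp: less_Suc_eq \<sigma>_def perm_insert_def)
  show ?thesis
  proof (cases "w' ! k = i \<and> (\<forall>a<m. d ! \<tau> a = w ! a)")
    case False
    then show ?thesis using cond w w' d(1)
      by (auto simp: matsumoto_coeff_def \<sigma>_def[symmetric] d_def[symmetric])
  next
    case match: True
    have old: "(\<Prod>(a, b)\<in>inversions m \<tau>. p ((w @ [i]) ! a) ((w @ [i]) ! b))
        = (\<Prod>(a, b)\<in>inversions m \<tau>. p (w ! a) (w ! b))"
      by (rule prod.cong) (auto simp: inversions_def wi)
    have new: "(\<Prod>(a, b)\<in>(\<lambda>a. (a, m)) ` {a. a < m \<and> k \<le> \<tau> a}. p ((w @ [i]) ! a) ((w @ [i]) ! b))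
        = (\<Prod>l\<in>{k<..m}. p (w' ! l) i)"
      unfolding prod_greaterThan_atMost_perm[OF \<tau>]
      using match d(2) lt by (subst prod.reindex) (auto simp: inj_on_def wi intro!: prod.cong)
    have "(\<Prod>(a, b)\<in>inversions (Suc m) \<sigma>. p ((w @ [i]) ! a) ((w @ [i]) ! b))
       = (\<Prod>(a, b)\<in>inversions m \<tau>. p (w ! a) (w ! b)) * (\<Prod>l\<in>{k<..m}. p (w' ! l) i)"
      unfolding \<sigma>_def inversions_perm_insert[OF \<tau>] old[symmetric] new[symmetric]
      by (rule prod.union_disjoint) (auto simp: finite_inversions, auto simp: inversions_def)
    then show ?thesis using cond match w w' d(1)
      by (simp add: matsumoto_coeff_def \<sigma>_def[symmetric] d_def[symmetric] mult.commute)
  qed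
qed

lemma sum_permutes_Suc:
  "(\<Sum>\<sigma> | \<sigma> permutes {..<Suc m}. f \<sigma>) = (\<Sum>k\<le>m. \<Sum>\<tau> | \<tau> permutes {..<m}. f (perm_insert m k \<tau>))"
proof -
  let ?P = "\<lambda>m. {\<sigma>. \<sigma> permutes {..<m}}"
  have "sum f (?P (Suc m)) = (\<Sum>k\<le>m. sum f {\<sigma> \<in> ?P (Suc m). \<sigma> m = k})"
  proof (rule sum.group[symmetric])
    show "(\<lambda>\<sigma>. \<sigma> m) ` ?P (Suc m) \<subseteq> {..m}"
      using permutes_in_image[of _ "{..<Suc m}" m] by (auto simp: less_Suc_eq_le)
  qed (simp_all add: finite_permutations)
  also have "\<dots> = (\<Sum>k\<le>m. \<Sum>\<tau>\<in>?P m. f (perm_insert m k \<tau>))"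
  proof (rule sum.cong[OF refl])
    fix k assume "k \<in> {..m}"
    then have k: "k \<le> m" by simp
    show "sum f {\<sigma> \<in> ?P (Suc m). \<sigma> m = k} = (\<Sum>\<tau>\<in>?P m. f (perm_insert m k \<tau>))"
    proof (rule sum.reindex_bij_witness[where i="perm_insert m k" and j="perm_remove m k"])
      fix \<sigma> assume "\<sigma> \<in> {\<sigma> \<in> ?P (Suc m). \<sigma> m = k}"
      then have \<sigma>: "\<sigma> permutes {..<Suc m}" "\<sigma> m = k" by auto
      show "perm_insert m k (perm_remove m k \<sigma>) = \<sigma>" by (rule perm_insert_remove[OF \<sigma>])
      then show "f (perm_insert m k (perm_remove m k \<sigma>)) = f \<sigma>" by simp
      show "perm_remove m k \<sigma> \<in> ?P m" using perm_remove_permutes[OF \<sigma>] by simp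
    next
      fix \<tau> assume "\<tau> \<in> ?P m"
      then have \<tau>: "\<tau> permutes {..<m}" by simp
      show "perm_remove m k (perm_insert m k \<tau>) = \<tau>" by (rule perm_remove_insert[OF \<tau>])
      show "perm_insert m k \<tau> \<in> {\<sigma> \<in> ?P (Suc m). \<sigma> m = k}"
        using perm_insert_permutes[OF \<tau> k] by (simp add: perm_insert_def)
    qed
  qed
  finally show ?thesis .
qed

text \<open>The recursion \<open>S\<^sub>m\<^sub>+\<^sub>1 = (S\<^sub>m \<otimes> id) (1 + c\<^sub>m + c\<^sub>m c\<^sub>m\<^sub>-\<^sub>1 + \<dots> + c\<^sub>m \<cdots> c\<^sub>1)\<close> on coefficients:
  the last letter of \<open>w\<close> is moved to position \<open>k\<close>.\<close>

lemma symc_snoc: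
  assumes w: "length w = m"
  shows "symc p (w @ [i]) w' = (\<Sum>k\<le>m. if length w' = Suc m \<and> w' ! k = i
      then (\<Prod>l\<in>{k<..m}. p (w' ! l) i) * symc p w (drop_nth k w') else 0)"
proof -
  have "symc p (w @ [i]) w'
      = (\<Sum>k\<le>m. \<Sum>\<tau> | \<tau> permutes {..<m}. matsumoto_coeff p (perm_insert m k \<tau>) (w @ [i]) w')"
    using w by (simp add: symc_eq_sum_matsumoto_coeff sum_permutes_Suc)
  also have "\<dots> = (\<Sum>k\<le>m. \<Sum>\<tau> | \<tau> permutes {..<m}. if length w' = Suc m \<and> w' ! k = i
      then (\<Prod>l\<in>{k<..m}. p (w' ! l) i) * matsumoto_coeff p \<tau> w (drop_nth k w') else 0)"
    using w by (intro sum.cong refl) (simp add: matsumoto_coeff_perm_insert)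
  also have "\<dots> = (\<Sum>k\<le>m. if length w' = Suc m \<and> w' ! k = i
      then (\<Prod>l\<in>{k<..m}. p (w' ! l) i) * symc p w (drop_nth k w') else 0)"
    by (intro sum.cong refl) (auto simp: symc_eq_sum_matsumoto_coeff w sum_distrib_left)
  finally show ?thesis .
qed

section \<open>The Nichols ideal is a two-sided ideal\<close>

lemma tensor_finite_support: "tensor n u \<Longrightarrow> finite {w. u w \<noteq> 0}"
  by (simp add: tensor_def)

lemma tensor_comp: "tensor n u \<Longrightarrow> tensor n (comp m u)"
  unfolding tensor_def comp_def by (auto elim: finite_subset[rotated])

lemma tensor_tadd: "tensor n u \<Longrightarrow> tensor n v \<Longrightarrow> tensor n (tadd u v)"
proof -
  assume u: "tensor n u" and v: "tensor n v"
  have "{w. tadd u v w \<noteq> 0} \<subseteq> {w. u w \<noteq> 0} \<union> {w. v w \<noteq> 0}" by (auto simp: tadd_def)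
  then have "finite {w. tadd u v w \<noteq> 0}"
    by (rule finite_subset) (use u v in \<open>simp add: tensor_def\<close>)
  moreover have "set w \<subseteq> {..<n}" if "tadd u v w \<noteq> 0" for w
  proof -
    have "u w \<noteq> 0 \<or> v w \<noteq> 0" using that by (auto simp: tadd_def)
    then show ?thesis using u v by (auto simp: tensor_def)
  qed
  ultimately show ?thesis by (simp add: tensor_def)
qed

lemma tensor_tsmult: "tensor n u \<Longrightarrow> tensor n (tsmult c u)"
  unfolding tensor_def tsmult_def by (auto elim: finite_subset[rotated])

lemma comp_tadd: "comp m (tadd u v) = tadd (comp m u) (comp m v)"
  by (rule ext) (simp add: comp_def tadd_def)

lemma comp_tsmult: "comp m (tsmult c u) = tsmult c (comp m u)"
  by (rule ext) (simp add: comp_def tsmult_def)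

lemma qsym_eq_sum_superset:
  assumes "finite S" "{w. f w \<noteq> 0} \<subseteq> S"
  shows "qsym p f w' = (\<Sum>w\<in>S. f w * symc p w w')"
  unfolding qsym_def using assms by (intro sum.mono_neutral_left) auto

lemma qsym_tadd:
  assumes "tensor n u" "tensor n v"
  shows "qsym p (tadd u v) = tadd (qsym p u) (qsym p v)"
proof
  fix w'
  let ?S = "{w. u w \<noteq> 0} \<union> {w. v w \<noteq> 0}"
  have S: "finite ?S" using assms by (simp add: tensor_def)
  have "qsym p (tadd u v) w' = (\<Sum>w\<in>?S. tadd u v w * symc p w w')"
    by (rule qsym_eq_sum_superset[OF S]) (auto simp: tadd_def)
  also have "\<dots> = (\<Sum>w\<in>?S. u w * symc p w w') + (\<Sum>w\<in>?S. v w * symc p w w')"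
    by (simp add: tadd_def sum.distrib distrib_right)
  also have "\<dots> = qsym p u w' + qsym p v w'"
    by (subst (1 2) qsym_eq_sum_superset[OF S]) auto
  finally show "qsym p (tadd u v) w' = tadd (qsym p u) (qsym p v) w'" by (simp add: tadd_def)
qed

lemma qsym_tsmult:
  assumes "tensor n u"
  shows "qsym p (tsmult c u) = tsmult c (qsym p u)"
proof
  fix w'
  have S: "finite {w. u w \<noteq> 0}" using assms by (simp add: tensor_def)
  have "qsym p (tsmult c u) w' = (\<Sum>w | u w \<noteq> 0. tsmult c u w * symc p w w')"
    by (rule qsym_eq_sum_superset[OF S]) (auto simp: tsmult_def)
  also have "\<dots> = c * qsym p u w'"
    by (simp add: qsym_def tsmult_def sum_distrib_left mult.assoc)
  finally show "qsym p (tsmult c u) w' = tsmult c (qsym p u) w'" by (simp add: tsmult_def)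
qed

lemma nichols_ideal_tensor: "u \<in> nichols_ideal n p \<Longrightarrow> tensor n u"
  by (simp add: nichols_ideal_def)

lemma nichols_ideal_short: "u \<in> nichols_ideal n p \<Longrightarrow> length w < 2 \<Longrightarrow> u w = 0"
  by (simp add: nichols_ideal_def)

lemma nichols_ideal_qsym: "u \<in> nichols_ideal n p \<Longrightarrow> qsym p (comp m u) = (\<lambda>_. 0)"
proof (cases "m < 2")
  case True
  assume "u \<in> nichols_ideal n p"
  then have "comp m u = (\<lambda>_. 0)" using True by (auto simp: comp_def nichols_ideal_short)
  then show ?thesis by (simp add: qsym_def)
qed (simp add: nichols_ideal_def)

lemma nichols_idealI:
  assumes "tensor n u" "\<And>w. length w < 2 \<Longrightarrow> u w = 0" "\<And>m. qsym p (comp m u) = (\<lambda>_. 0)"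
  shows "u \<in> nichols_ideal n p"
  using assms by (simp add: nichols_ideal_def)

lemma nichols_ideal_zero: "(\<lambda>_. 0) \<in> nichols_ideal n p"
  by (simp add: nichols_ideal_def tensor_def comp_def qsym_def)

lemma nichols_ideal_tadd:
  assumes u: "u \<in> nichols_ideal n p" and v: "v \<in> nichols_ideal n p"
  shows "tadd u v \<in> nichols_ideal n p"
proof (rule nichols_idealI)
  note tu = nichols_ideal_tensor[OF u] and tv = nichols_ideal_tensor[OF v]
  show "tensor n (tadd u v)" using tu tv by (rule tensor_tadd)
  show "tadd u v w = 0" if "length w < 2" for w
    using that u v by (simp add: tadd_def nichols_ideal_short)
  show "qsym p (comp m (tadd u v)) = (\<lambda>_. 0)" for m
    unfolding comp_tadd qsym_tadd[OF tensor_comp[OF tu] tensor_comp[OF tv]]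
      nichols_ideal_qsym[OF u] nichols_ideal_qsym[OF v] by (simp add: tadd_def)
qed

lemma nichols_ideal_tsmult:
  assumes u: "u \<in> nichols_ideal n p"
  shows "tsmult c u \<in> nichols_ideal n p"
proof (rule nichols_idealI)
  note tu = nichols_ideal_tensor[OF u]
  show "tensor n (tsmult c u)" using tu by (rule tensor_tsmult)
  show "tsmult c u w = 0" if "length w < 2" for w
    using that u by (simp add: tsmult_def nichols_ideal_short)
  show "qsym p (comp m (tsmult c u)) = (\<lambda>_. 0)" for m
    unfolding comp_tsmult qsym_tsmult[OF tensor_comp[OF tu]] nichols_ideal_qsym[OF u]
    by (simp add: tsmult_def)
qed

lemma nichols_ideal_tdiff:
  assumes "u \<in> nichols_ideal n p" "v \<in> nichols_ideal n p"
  shows "tdiff u v \<in> nichols_ideal n p"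
proof -
  have "tdiff u v = tadd u (tsmult (-1) v)" by (auto simp: tdiff_def tadd_def tsmult_def)
  then show ?thesis using assms by (simp add: nichols_ideal_tadd nichols_ideal_tsmult)
qed

lemma nichols_ideal_sum:
  assumes "finite A" "\<And>a. a \<in> A \<Longrightarrow> f a \<in> nichols_ideal n p"
  shows "(\<lambda>w. \<Sum>a\<in>A. f a w) \<in> nichols_ideal n p"
  using assms
proof (induction A rule: finite_induct)
  case empty
  then show ?case using nichols_ideal_zero by simp
next
  case (insert a A)
  have "(\<lambda>w. \<Sum>a\<in>insert a A. f a w) = tadd (f a) (\<lambda>w. \<Sum>a\<in>A. f a w)"
    using insert by (auto simp: tadd_def)
  then show ?case using insert by (simp add: nichols_ideal_tadd)
qed

lemma drop_eq_singleton_iff: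
  assumes "k \<le> length y"
  shows "drop k y = [i] \<longleftrightarrow> y \<noteq> [] \<and> k = length y - 1 \<and> last y = i"
proof
  assume d: "drop k y = [i]"
  then have k: "k = length y - 1" "y \<noteq> []" using assms by (auto dest: arg_cong[of _ _ length])
  have "last (drop k y) = last y" using k by (intro last_drop) auto
  then have "last y = i" unfolding d by simp
  with k show "y \<noteq> [] \<and> k = length y - 1 \<and> last y = i" by simp
next
  assume "y \<noteq> [] \<and> k = length y - 1 \<and> last y = i"
  then show "drop k y = [i]"
    by (metis append_butlast_last_id append_eq_conv_conj length_butlast)
qed

lemma tmul_gen_right:
  "tmul z (gen i) y = (if y \<noteq> [] \<and> last y = i then z (butlast y) else 0)"
proof -
  have "tmul z (gen i) y
      = (\<Sum>k\<le>length y. if k = length y - 1 then (if y \<noteq> [] \<and> last y = i then z (butlast y) else 0) else 0)"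
    unfolding tmul_def
    by (intro sum.cong) (auto simp: gen_def butlast_conv_take drop_eq_singleton_iff)
  also have "\<dots> = (if y \<noteq> [] \<and> last y = i then z (butlast y) else 0)"
    by (subst sum.delta) auto
  finally show ?thesis .
qed

text \<open>By \<open>symc_snoc\<close>, every coefficient of \<open>S\<^sub>m\<^sub>+\<^sub>1 (z x\<^sub>i)\<close> is a combination of coefficients of \<open>S\<^sub>m z\<close>.\<close>

lemma qsym_tmul_gen:
  assumes fin: "finite {w. z w \<noteq> 0}" and len: "\<And>w. z w \<noteq> 0 \<Longrightarrow> length w = m"
    and q: "qsym p z = (\<lambda>_. 0)"
  shows "qsym p (tmul z (gen i)) = (\<lambda>_. 0)"
proof
  fix w'
  let ?S = "{w. z w \<noteq> 0}"
  let ?c = "\<lambda>k. if length w' = Suc m \<and> w' ! k = i then \<Prod>l\<in>{k<..m}. p (w' ! l) i else 0"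
  have "{y. tmul z (gen i) y \<noteq> 0} \<subseteq> (\<lambda>x. x @ [i]) ` ?S"
  proof
    fix y assume "y \<in> {y. tmul z (gen i) y \<noteq> 0}"
    then have "y \<noteq> []" "last y = i" "z (butlast y) \<noteq> 0" by (auto simp: tmul_gen_right split: if_splits)
    then show "y \<in> (\<lambda>x. x @ [i]) ` ?S" by (intro image_eqI[of _ _ "butlast y"]) auto
  qed
  then have "qsym p (tmul z (gen i)) w' = (\<Sum>y\<in>(\<lambda>x. x @ [i]) ` ?S. tmul z (gen i) y * symc p y w')"
    by (rule qsym_eq_sum_superset[OF finite_imageI[OF fin]])
  also have "\<dots> = (\<Sum>x\<in>?S. z x * symc p (x @ [i]) w')"
    by (subst sum.reindex) (auto simp: inj_on_def tmul_gen_right)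
  also have "\<dots> = (\<Sum>x\<in>?S. z x * (\<Sum>k\<le>m. ?c k * symc p x (drop_nth k w')))"
    using len by (intro sum.cong refl) (auto simp: symc_snoc intro!: sum.cong)
  also have "\<dots> = (\<Sum>k\<le>m. ?c k * qsym p z (drop_nth k w'))"
    by (simp add: qsym_def sum_distrib_left sum_distrib_right mult_ac sum.swap[of _ ?S])
  also have "\<dots> = 0" using q by simp
  finally show "qsym p (tmul z (gen i)) w' = 0" .
qed

lemma nichols_ideal_tmul_gen:
  assumes z: "z \<in> nichols_ideal n p" and i: "i < n"
  shows "tmul z (gen i) \<in> nichols_ideal n p"
proof (rule nichols_idealI)
  note tz = nichols_ideal_tensor[OF z]
  have supp: "y = butlast y @ [i] \<and> z (butlast y) \<noteq> 0" if "tmul z (gen i) y \<noteq> 0" for y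
    using that by (auto simp: tmul_gen_right split: if_splits)
  show "tensor n (tmul z (gen i))"
    unfolding tensor_def
  proof (intro conjI allI impI)
    have "{y. tmul z (gen i) y \<noteq> 0} \<subseteq> (\<lambda>x. x @ [i]) ` {w. z w \<noteq> 0}"
      using supp by blast
    then show "finite {y. tmul z (gen i) y \<noteq> 0}"
      by (rule finite_subset) (use tz in \<open>simp add: tensor_def\<close>)
    show "set y \<subseteq> {..<n}" if "tmul z (gen i) y \<noteq> 0" for y
    proof -
      have "set (butlast y) \<subseteq> {..<n}" using supp[OF that] tz by (auto simp: tensor_def)
      then have "set (butlast y @ [i]) \<subseteq> {..<n}" using i by simp
      then show ?thesis using supp[OF that] by metis
    qed
  qed
  show "tmul z (gen i) w = 0" if "length w < 2" for w
    using that nichols_ideal_short[OF z, of "butlast w"] by (auto simp: tmul_gen_right)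
  show "qsym p (comp m (tmul z (gen i))) = (\<lambda>_. 0)" for m
  proof (cases m)
    case 0
    then have "comp m (tmul z (gen i)) = (\<lambda>_. 0)" by (auto simp: comp_def tmul_gen_right)
    then show ?thesis by (simp add: qsym_def)
  next
    case (Suc m')
    have comp_eq: "comp m (tmul z (gen i)) = tmul (comp m' z) (gen i)"
      by (rule ext) (auto simp: Suc comp_def tmul_gen_right)
    show ?thesis unfolding comp_eq
    proof (rule qsym_tmul_gen)
      show "finite {w. comp m' z w \<noteq> 0}" by (rule tensor_finite_support[OF tensor_comp[OF tz]])
      show "length w = m'" if "comp m' z w \<noteq> 0" for w using that by (simp add: comp_def split: if_splits)
      show "qsym p (comp m' z) = (\<lambda>_. 0)" by (rule nichols_ideal_qsym[OF z])
    qed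
  qed
qed

definition rmul_word :: "(nat list \<Rightarrow> 'a::field) \<Rightarrow> nat list \<Rightarrow> nat list \<Rightarrow> 'a" where
  "rmul_word z w = (\<lambda>y. if \<exists>x. y = x @ w then z (take (length y - length w) y) else 0)"

lemma rmul_word_Nil: "rmul_word z [] = z"
  by (rule ext) (simp add: rmul_word_def)

lemma rmul_word_Cons: "rmul_word z (i # w) = rmul_word (tmul z (gen i)) w"
proof
  fix y
  show "rmul_word z (i # w) y = rmul_word (tmul z (gen i)) w y"
  proof (cases "\<exists>x. y = x @ w")
    case True
    then obtain x where x: "y = x @ w" by auto
    have "(\<exists>x'. y = x' @ i # w) \<longleftrightarrow> x \<noteq> [] \<and> last x = i"
    proof
      assume "\<exists>x'. y = x' @ i # w"
      then obtain x' where "x @ w = (x' @ [i]) @ w" using x by auto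
      then show "x \<noteq> [] \<and> last x = i" by simp
    next
      assume "x \<noteq> [] \<and> last x = i"
      then have "y = butlast x @ i # w" using x by (metis append_butlast_last_id append_Cons append_Nil append.assoc)
      then show "\<exists>x'. y = x' @ i # w" by blast
    qed
    moreover have "take (length y - length (i # w)) y = butlast x" using x by (simp add: butlast_conv_take)
    ultimately show ?thesis using x by (auto simp: rmul_word_def tmul_gen_right)
  next
    case False
    then have "\<not> (\<exists>x. y = x @ i # w)" by auto
    then show ?thesis using False by (simp add: rmul_word_def)
  qed
qed

lemma nichols_ideal_rmul_word:
  assumes "z \<in> nichols_ideal n p" "set w \<subseteq> {..<n}"
  shows "rmul_word z w \<in> nichols_ideal n p"
  using assms by (induction w arbitrary: z) (simp_all add: rmul_word_Nil rmul_word_Cons nichols_ideal_tmul_gen)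

lemma tmul_eq_sum_rmul_word:
  assumes fin: "finite {w. v w \<noteq> 0}"
  shows "tmul z v y = (\<Sum>w | v w \<noteq> 0. v w * rmul_word z w y)"
proof -
  let ?S = "{w. v w \<noteq> 0}"
  let ?D = "(\<lambda>k. drop k y) ` {..length y}"
  let ?g = "\<lambda>w. z (take (length y - length w) y) * v w"
  have "inj_on (\<lambda>k. drop k y) {..length y}"
    by (rule inj_onI) (metis atMost_iff diff_diff_cancel length_drop)
  then have "tmul z v y = sum ?g ?D"
    unfolding tmul_def by (simp add: sum.reindex min_def)
  also have "\<dots> = sum ?g (?D \<inter> ?S)" by (rule sum.mono_neutral_right) auto
  also have "\<dots> = (\<Sum>w\<in>?S. v w * rmul_word z w y)"
  proof (rule sum.mono_neutral_cong_left[OF fin])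
    have "w \<in> ?D" if "y = x @ w" for x w
      using that by (intro image_eqI[of _ _ "length x"]) auto
    then show "\<forall>w\<in>?S - ?D \<inter> ?S. v w * rmul_word z w y = 0" by (auto simp: rmul_word_def)
    show "?g w = v w * rmul_word z w y" if w: "w \<in> ?D \<inter> ?S" for w
    proof -
      obtain k where "w = drop k y" using w by blast
      then have "y = take k y @ w" by simp
      then show ?thesis unfolding rmul_word_def by (metis (mono_tags) mult.commute)
    qed
  qed auto
  finally show ?thesis .
qed

lemma nichols_ideal_tmul_right:
  assumes z: "z \<in> nichols_ideal n p" and v: "tensor n v"
  shows "tmul z v \<in> nichols_ideal n p"
proof -
  have fin: "finite {w. v w \<noteq> 0}" using v by (rule tensor_finite_support)
  have "tmul z v = (\<lambda>y. \<Sum>w | v w \<noteq> 0. tsmult (v w) (rmul_word z w) y)"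
    by (rule ext) (simp add: tmul_eq_sum_rmul_word[OF fin] tsmult_def)
  also have "\<dots> \<in> nichols_ideal n p"
    using v by (intro nichols_ideal_sum[OF fin] nichols_ideal_tsmult nichols_ideal_rmul_word[OF z])
      (auto simp: tensor_def)
  finally show ?thesis .
qed

text \<open>Reading words backwards transposes the braiding matrix \<open>p\<close> and exchanges left and right
  multiplication, so the left ideal property follows from the right one.\<close>

definition trev :: "(nat list \<Rightarrow> 'a) \<Rightarrow> nat list \<Rightarrow> 'a" where
  "trev u = (\<lambda>w. u (rev w))"

lemma support_trev: "{w. trev u w \<noteq> 0} = rev ` {w. u w \<noteq> 0}"
  by (auto simp: trev_def image_iff) (metis rev_rev_ident)

lemma tensor_trev: "tensor n u \<Longrightarrow> tensor n (trev u)"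
  unfolding tensor_def support_trev by (simp add: trev_def) (metis set_rev)

lemma comp_trev: "comp m (trev u) = trev (comp m u)"
  by (rule ext) (simp add: comp_def trev_def)

lemma tmul_trev: "tmul u v y = tmul (trev v) (trev u) (rev y)"
proof -
  have "tmul (trev v) (trev u) (rev y) = (\<Sum>k\<le>length y. v (drop (length y - k) y) * u (take (length y - k) y))"
    by (simp add: tmul_def trev_def rev_take rev_drop)
  also have "\<dots> = (\<Sum>k\<le>length y. u (take k y) * v (drop k y))"
    by (rule sum.reindex_bij_witness[where i="\<lambda>k. length y - k" and j="\<lambda>k. length y - k"])
      (auto simp: mult.commute)
  finally show ?thesis by (simp add: tmul_def)
qed

definition rev_index :: "nat \<Rightarrow> nat \<Rightarrow> nat" where
  "rev_index m a = (if a < m then m - Suc a else a)"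

lemma rev_index_rev_index [simp]: "rev_index m (rev_index m a) = a"
  by (simp add: rev_index_def)

lemma rev_index_less_iff [simp]: "rev_index m a < m \<longleftrightarrow> a < m"
  by (simp add: rev_index_def)

lemma rev_index_mono_iff:
  "a < m \<Longrightarrow> b < m \<Longrightarrow> rev_index m a < rev_index m b \<longleftrightarrow> b < a"
  by (auto simp: rev_index_def)

lemma rev_index_permutes: "rev_index m permutes {..<m}"
  by (rule inj_imp_permutes) (auto simp: rev_index_def inj_on_def)

lemma nth_rev_index: "a < length xs \<Longrightarrow> rev xs ! a = xs ! rev_index (length xs) a"
  by (simp add: rev_nth rev_index_def)

lemma inversions_conj_rev_index:
  assumes \<tau>: "\<tau> permutes {..<m}"
  defines "r \<equiv> rev_index m"
  shows "(a, b) \<in> inversions m (r \<circ> \<tau> \<circ> r) \<longleftrightarrow> (r b, r a) \<in> inversions m \<tau>"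
proof -
  have lt: "\<And>x. x < m \<Longrightarrow> \<tau> x < m" using permutes_in_image[OF \<tau>] by auto
  have mono: "\<And>x y. x < m \<Longrightarrow> y < m \<Longrightarrow> r x < r y \<longleftrightarrow> y < x"
    by (simp add: r_def rev_index_mono_iff)
  have "(a, b) \<in> inversions m (r \<circ> \<tau> \<circ> r) \<longleftrightarrow> a < b \<and> b < m \<and> \<tau> (r a) < \<tau> (r b)"
    using mono lt by (auto simp: inversions_def r_def)
  also have "\<dots> \<longleftrightarrow> (r b, r a) \<in> inversions m \<tau>"
  proof -
    have "b < m" if "r b < r a" "r a < m"
      using that by (metis r_def not_less order.strict_trans rev_index_def)
    then show ?thesis using mono by (auto simp: inversions_def r_def)
  qed
  finally show ?thesis .
qed

lemma prod_inversions_conj_rev_index: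
  assumes \<tau>: "\<tau> permutes {..<m}"
  defines "r \<equiv> rev_index m"
  shows "(\<Prod>(a, b)\<in>inversions m (r \<circ> \<tau> \<circ> r). f a b) = (\<Prod>(a, b)\<in>inversions m \<tau>. f (r b) (r a))"
proof (rule prod.reindex_bij_witness[where i="\<lambda>(c, d). (r d, r c)" and j="\<lambda>(a, b). (r b, r a)"])
  fix x assume x: "x \<in> inversions m (r \<circ> \<tau> \<circ> r)"
  obtain a b where ab: "x = (a, b)" by (cases x)
  show "(\<lambda>(c, d). (r d, r c)) ((\<lambda>(a, b). (r b, r a)) x) = x"
    "(\<lambda>(a, b). (r b, r a)) x \<in> inversions m \<tau>"
    "(\<lambda>(a, b). f (r b) (r a)) ((\<lambda>(a, b). (r b, r a)) x) = (\<lambda>(a, b). f a b) x"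
    using x ab inversions_conj_rev_index[OF \<tau>, of a b] by (simp_all add: r_def)
next
  fix y assume y: "y \<in> inversions m \<tau>"
  obtain c d where cd: "y = (c, d)" by (cases y)
  show "(\<lambda>(a, b). (r b, r a)) ((\<lambda>(c, d). (r d, r c)) y) = y"
    "(\<lambda>(c, d). (r d, r c)) y \<in> inversions m (r \<circ> \<tau> \<circ> r)"
    using y cd inversions_conj_rev_index[OF \<tau>, of "r d" "r c"] by (simp_all add: r_def)
qed

lemma matsumoto_coeff_rev:
  assumes \<tau>: "\<tau> permutes {..<length u}"
  defines "r \<equiv> rev_index (length u)"
  shows "matsumoto_coeff q (r \<circ> \<tau> \<circ> r) (rev u) w' = matsumoto_coeff (\<lambda>a b. q b a) \<tau> u (rev w')"
proof (cases "length w' = length u")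
  case False
  then show ?thesis by (simp add: matsumoto_coeff_def)
next
  case len: True
  let ?m = "length u"
  have lt: "\<And>a. a < ?m \<Longrightarrow> \<tau> a < ?m" using permutes_in_image[OF \<tau>] by auto
  have cond: "(\<forall>a<?m. w' ! r (\<tau> (r a)) = rev u ! a) \<longleftrightarrow> (\<forall>a<?m. rev w' ! \<tau> a = u ! a)"
  proof
    assume A: "\<forall>a<?m. w' ! r (\<tau> (r a)) = rev u ! a"
    show "\<forall>a<?m. rev w' ! \<tau> a = u ! a"
    proof (intro allI impI)
      fix a assume a: "a < ?m"
      have "w' ! r (\<tau> (r (r a))) = rev u ! r a" using A[rule_format, of "r a"] a by (simp add: r_def)
      then show "rev w' ! \<tau> a = u ! a" using a lt len by (simp add: nth_rev_index r_def)
    qed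
  next
    assume A: "\<forall>a<?m. rev w' ! \<tau> a = u ! a"
    show "\<forall>a<?m. w' ! r (\<tau> (r a)) = rev u ! a"
    proof (intro allI impI)
      fix a assume a: "a < ?m"
      have "rev w' ! \<tau> (r a) = u ! r a" using A[rule_format, of "r a"] a by (simp add: r_def)
      then show "w' ! r (\<tau> (r a)) = rev u ! a" using a lt len by (simp add: nth_rev_index r_def)
    qed
  qed
  have "(\<Prod>(a, b)\<in>inversions ?m (r \<circ> \<tau> \<circ> r). q (rev u ! a) (rev u ! b))
      = (\<Prod>(a, b)\<in>inversions ?m \<tau>. q (rev u ! r b) (rev u ! r a))"
    unfolding r_def by (rule prod_inversions_conj_rev_index[OF \<tau>])
  also have "\<dots> = (\<Prod>(a, b)\<in>inversions ?m \<tau>. q (u ! b) (u ! a))"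
    by (rule prod.cong) (auto simp: inversions_def nth_rev_index r_def)
  finally have prod: "(\<Prod>(a, b)\<in>inversions ?m (r \<circ> \<tau> \<circ> r). q (rev u ! a) (rev u ! b))
      = (\<Prod>(a, b)\<in>inversions ?m \<tau>. q (u ! b) (u ! a))" .
  show ?thesis
    using len cond prod by (auto simp: matsumoto_coeff_def)
qed

lemma symc_rev: "symc q (rev u) w' = symc (\<lambda>a b. q b a) u (rev w')"
proof -
  let ?m = "length u"
  let ?r = "rev_index ?m"
  let ?P = "{\<tau>. \<tau> permutes {..<?m}}"
  have conj: "?r \<circ> (?r \<circ> \<tau> \<circ> ?r) \<circ> ?r = \<tau>" for \<tau> by (rule ext) simp
  have "symc (\<lambda>a b. q b a) u (rev w') = (\<Sum>\<tau>\<in>?P. matsumoto_coeff q (?r \<circ> \<tau> \<circ> ?r) (rev u) w')"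
    by (simp add: symc_eq_sum_matsumoto_coeff matsumoto_coeff_rev)
  also have "\<dots> = (\<Sum>\<sigma>\<in>?P. matsumoto_coeff q \<sigma> (rev u) w')"
    by (rule sum.reindex_bij_witness[where i="\<lambda>\<sigma>. ?r \<circ> \<sigma> \<circ> ?r" and j="\<lambda>\<tau>. ?r \<circ> \<tau> \<circ> ?r"])
      (simp_all add: conj permutes_compose rev_index_permutes)
  also have "\<dots> = symc q (rev u) w'"
    by (simp add: symc_eq_sum_matsumoto_coeff)
  finally show ?thesis by simp
qed

lemma qsym_trev:
  assumes "finite {w. f w \<noteq> 0}"
  shows "qsym q (trev f) w' = qsym (\<lambda>a b. q b a) f (rev w')"
proof -
  have "qsym q (trev f) w' = (\<Sum>w\<in>rev ` {w. f w \<noteq> 0}. trev f w * symc q w w')"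
    unfolding qsym_def support_trev ..
  also have "\<dots> = (\<Sum>w | f w \<noteq> 0. f w * symc q (rev w) w')"
    by (subst sum.reindex) (auto simp: trev_def)
  finally show ?thesis by (simp add: qsym_def symc_rev)
qed

lemma nichols_ideal_trev:
  assumes z: "z \<in> nichols_ideal n p"
  shows "trev z \<in> nichols_ideal n (\<lambda>a b. p b a)"
proof (rule nichols_idealI)
  note tz = nichols_ideal_tensor[OF z]
  show "tensor n (trev z)" by (rule tensor_trev[OF tz])
  show "trev z w = 0" if "length w < 2" for w
    using that nichols_ideal_short[OF z, of "rev w"] by (simp add: trev_def)
  show "qsym (\<lambda>a b. p b a) (comp m (trev z)) = (\<lambda>_. 0)" for m
    unfolding comp_trev
    by (rule ext) (simp add: qsym_trev tensor_finite_support[OF tensor_comp[OF tz]] nichols_ideal_qsym[OF z])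
qed

lemma nichols_ideal_tmul_left:
  assumes z: "z \<in> nichols_ideal n p" and v: "tensor n v"
  shows "tmul v z \<in> nichols_ideal n p"
proof -
  have "tmul (trev z) (trev v) \<in> nichols_ideal n (\<lambda>a b. p b a)"
    by (rule nichols_ideal_tmul_right[OF nichols_ideal_trev[OF z] tensor_trev[OF v]])
  from nichols_ideal_trev[OF this] show ?thesis
    by (simp add: trev_def tmul_trev[of v z, abs_def])
qed

section \<open>The Nichols ideal in degree two\<close>

lemma symc_singleton: "symc p [c] v = (if v = [c] then 1 else 0)"
proof -
  have "{\<sigma>. \<sigma> permutes {..<Suc 0}} = {id}" by (auto simp: lessThan_Suc)
  moreover have "inversions (Suc 0) id = {}" by (auto simp: inversions_def)
  moreover have "length v = Suc 0 \<and> v ! 0 = c \<longleftrightarrow> v = [c]" by (cases v) auto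
  ultimately show ?thesis by (simp add: symc_eq_sum_matsumoto_coeff matsumoto_coeff_def)
qed

lemma symc_length2:
  assumes "length w = 2"
  shows "symc p w [a, b] = (if w = [a, b] then 1 else 0) + (if w = [b, a] then p b a else 0)"
proof -
  obtain c w1 where cw: "w = c # w1" "length w1 = 1" using assms by (cases w) auto
  then obtain d where w: "w = [c] @ [d]" by (cases w1) auto
  have "symc p w [a, b] = (\<Sum>k\<le>1. if length [a, b] = Suc 1 \<and> [a, b] ! k = d
      then (\<Prod>l\<in>{k<..1}. p ([a, b] ! l) d) * symc p [c] (drop_nth k [a, b]) else 0)"
    unfolding w by (rule symc_snoc) simp
  also have "\<dots> = (if a = d then p b d * symc p [c] [b] else 0) + (if b = d then symc p [c] [a] else 0)"
  proof -
    have "{..1::nat} = {0, 1}" "{0<..1::nat} = {1}" "{1<..1::nat} = {}" by auto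
    then show ?thesis by (simp add: drop_nth_def)
  qed
  finally show ?thesis
    unfolding symc_singleton w by (cases "a = d"; cases "b = d"; cases "c = a"; cases "c = b") simp_all
qed

lemma qsym_length2:
  assumes fin: "finite {w. f w \<noteq> 0}" and len: "\<And>w. f w \<noteq> 0 \<Longrightarrow> length w = 2"
  shows "qsym p f [a, b] = f [a, b] + p b a * f [b, a]"
proof -
  let ?S = "{w. f w \<noteq> 0}"
  have "qsym p f [a, b] = (\<Sum>w\<in>?S. (if w = [a, b] then f w else 0) + (if w = [b, a] then p b a * f w else 0))"
    unfolding qsym_def
  proof (rule sum.cong[OF refl])
    \<comment> \<open>kept abstract in \<open>c1\<close>, \<open>c2\<close>: on the concrete list equations the simplifier does not terminate\<close>
    have distrib: "x * ((if c1 then 1 else 0) + (if c2 then q else 0)) = (if c1 then x else 0) + (if c2 then q * x else 0)"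
      for x q :: 'a and c1 c2 by (simp add: distrib_left mult.commute)
    fix w assume "w \<in> ?S"
    then have "length w = 2" using len by blast
    then show "f w * symc p w [a, b] = (if w = [a, b] then f w else 0) + (if w = [b, a] then p b a * f w else 0)"
      by (subst symc_length2) (simp_all only: distrib)
  qed
  also have "\<dots> = f [a, b] + p b a * f [b, a]"
    by (simp add: sum.distrib sum.delta[OF fin])
  finally show ?thesis .
qed

lemma nichols_ideal_length2:
  assumes z: "z \<in> nichols_ideal n p"
  shows "z [a, b] + p b a * z [b, a] = 0"
proof -
  have "finite {w. comp 2 z w \<noteq> 0}"
    by (rule tensor_finite_support[OF tensor_comp[OF nichols_ideal_tensor[OF z]]])
  then have "qsym p (comp 2 z) [a, b] = comp 2 z [a, b] + p b a * comp 2 z [b, a]"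
    by (rule qsym_length2) (simp add: comp_def split: if_splits)
  then show ?thesis using nichols_ideal_qsym[OF z, of 2] by (simp add: comp_def)
qed

lemma nichols_ideal_length2_eq_0:
  assumes z: "z \<in> nichols_ideal n p" and "p a b * p b a \<noteq> 1"
  shows "z [a, b] = 0"
proof -
  have "z [a, b] * (1 - p a b * p b a) = (z [a, b] + p b a * z [b, a]) - p b a * (z [b, a] + p a b * z [a, b])"
    by (simp add: algebra_simps)
  then show ?thesis using nichols_ideal_length2[OF z] assms(2) by simp
qed

lemma nichols_idealI_length2:
  assumes u: "tensor n u" and len: "\<And>w. u w \<noteq> 0 \<Longrightarrow> length w = 2"
    and rel: "\<And>a b. u [a, b] + p b a * u [b, a] = 0"
  shows "u \<in> nichols_ideal n p"
proof (rule nichols_idealI[OF u])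
  show "u w = 0" if "length w < 2" for w using that len by force
  show "qsym p (comp m u) = (\<lambda>_. 0)" for m
  proof (cases "m = 2")
    case True
    have "comp m u = u"
    proof
      show "comp m u w = u w" for w using True len[of w] by (auto simp: comp_def)
    qed
    moreover have "qsym p u w' = 0" for w'
    proof (cases "length w' = 2")
      case True
      then obtain a b where "w' = [a, b]" by (metis length_0_conv length_Suc_conv numeral_2_eq_2)
      then show ?thesis using qsym_length2[OF tensor_finite_support[OF u] len] rel by simp
    next
      case False
      then have "symc p w w' = 0" if "u w \<noteq> 0" for w using len[OF that] by (simp add: symc_def)
      then show ?thesis by (simp add: qsym_def)
    qed
    ultimately show ?thesis by auto
  next
    case False
    have "comp m u = (\<lambda>_. 0)"
    proof
      show "comp m u w = 0" for w using False len[of w] by (auto simp: comp_def)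
    qed
    then show ?thesis by (simp add: qsym_def)
  qed
qed

section \<open>Brackets and their closures in degree two\<close>

definition twisted_br :: "((nat \<Rightarrow> nat) \<Rightarrow> (nat \<Rightarrow> nat) \<Rightarrow> 'a) \<Rightarrow> ((nat \<Rightarrow> nat) \<Rightarrow> (nat \<Rightarrow> nat) \<Rightarrow> 'a)
    \<Rightarrow> (nat \<Rightarrow> nat) \<Rightarrow> (nat \<Rightarrow> nat) \<Rightarrow> (nat list \<Rightarrow> 'a::field) \<Rightarrow> (nat list \<Rightarrow> 'a) \<Rightarrow> nat list \<Rightarrow> 'a" where
  "twisted_br A B = (\<lambda>\<alpha> \<beta> u v. tdiff (tsmult (A \<alpha> \<beta>) (tmul u v)) (tsmult (B \<alpha> \<beta>) (tmul v u)))"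

lemma twisted_br_apply: "twisted_br A B \<alpha> \<beta> u v w = A \<alpha> \<beta> * tmul u v w - B \<alpha> \<beta> * tmul v u w"
  by (simp add: twisted_br_def tdiff_def tsmult_def)

lemma braided_br_eq_twisted_br: "braided_br n p = twisted_br (\<lambda>_ _. 1) (pchar n p)"
  unfolding braided_br_def twisted_br_def by (intro ext) (simp add: tsmult_def tdiff_def)

lemma L_br_eq_twisted_br: "L_br n p = twisted_br (\<lambda>\<alpha> \<beta>. pchar n p \<beta> \<alpha>) (pchar n p)"
  unfolding L_br_def twisted_br_def by (rule refl)

lemma comm_br_eq_twisted_br: "comm_br = twisted_br (\<lambda>_ _. 1) (\<lambda>_ _. 1)"
  unfolding comm_br_def twisted_br_def by (intro ext) (simp add: tsmult_def tdiff_def)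

lemma tmul_tsmult_tsmult: "tmul (tsmult a u) (tsmult b v) = tsmult (a * b) (tmul u v)"
  by (rule ext) (simp add: tmul_def tsmult_def sum_distrib_left mult_ac)

lemma twisted_br_tsmult_tsmult:
  "twisted_br A B \<alpha> \<beta> (tsmult a u) (tsmult b v) = tsmult (a * b) (twisted_br A B \<alpha> \<beta> u v)"
  unfolding twisted_br_def tmul_tsmult_tsmult by (rule ext) (simp add: tsmult_def tdiff_def algebra_simps)

lemma twisted_br_nichols_ideal_left:
  "u \<in> nichols_ideal n p \<Longrightarrow> tensor n v \<Longrightarrow> twisted_br A B \<alpha> \<beta> u v \<in> nichols_ideal n p"
  unfolding twisted_br_def
  by (intro nichols_ideal_tdiff nichols_ideal_tsmult nichols_ideal_tmul_right nichols_ideal_tmul_left)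

lemma twisted_br_nichols_ideal_right:
  "v \<in> nichols_ideal n p \<Longrightarrow> tensor n u \<Longrightarrow> twisted_br A B \<alpha> \<beta> u v \<in> nichols_ideal n p"
  unfolding twisted_br_def
  by (intro nichols_ideal_tdiff nichols_ideal_tsmult nichols_ideal_tmul_right nichols_ideal_tmul_left)

definition deg_gen :: "nat \<Rightarrow> nat \<Rightarrow> nat" where
  "deg_gen i = (\<lambda>k. if k = i then 1 else 0)"

lemma pchar_deg_gen:
  assumes "i < n" "j < n"
  shows "pchar n p (deg_gen i) (deg_gen j) = p i j"
proof -
  have "(\<Prod>b<n. p a b ^ (deg_gen i a * deg_gen j b)) = (if a = i then p i j else 1)" for a
  proof -
    have "(\<Prod>b<n. p a b ^ (deg_gen i a * deg_gen j b)) = (\<Prod>b<n. if a = i \<and> b = j then p a b else 1)"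
      by (rule prod.cong) (auto simp: deg_gen_def)
    then show ?thesis using assms by (simp add: prod.delta)
  qed
  then show ?thesis using assms by (simp add: pchar_def prod.delta)
qed

lemma count_list_eq_deg_gen_iff: "(\<forall>k. count_list w k = deg_gen i k) \<longleftrightarrow> w = [i]"
proof
  assume count: "\<forall>k. count_list w k = deg_gen i k"
  then have "i \<in> set w" by (metis count_list_0_iff deg_gen_def one_neq_zero)
  then obtain xs ys where w: "w = xs @ i # ys" by (meson split_list)
  have "count_list (xs @ ys) k = 0" for k
    using count[rule_format, of k] by (simp add: w deg_gen_def split: if_splits)
  then have "xs @ ys = []" by (metis count_list_0_iff last_in_set)
  then show "w = [i]" by (simp add: w)
qed (simp add: deg_gen_def)

lemma homog_gen: "i < n \<Longrightarrow> homog n (deg_gen i) (gen i)"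
  by (auto simp: homog_def tensor_def gen_def count_list_eq_deg_gen_iff)

lemma homog_deg_gen_support: "homog n (deg_gen i) u \<Longrightarrow> u w \<noteq> 0 \<Longrightarrow> w = [i]"
  by (simp add: homog_def count_list_eq_deg_gen_iff)

lemma homog_deg_eq_deg_gen:
  assumes "homog n \<alpha> u" "u [i] \<noteq> 0"
  shows "\<alpha> = deg_gen i"
proof
  fix k
  have "count_list [i] k = \<alpha> k" using assms unfolding homog_def by blast
  then show "\<alpha> k = deg_gen i k" by (auto simp: deg_gen_def split: if_splits)
qed

lemma gen_in_Vsp:
  assumes "i < n"
  shows "gen i \<in> Vsp n"
proof -
  have "gen i = (\<lambda>w. \<Sum>k<n. (if k = i then 1 else 0) * gen k w)"
    using assms by (intro ext) (simp add: if_distrib[of "\<lambda>c. c * _"] sum.delta cong: if_cong)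
  then show ?thesis unfolding Vsp_def by (intro CollectI exI[of _ "\<lambda>k. if k = i then 1 else 0"]) simp
qed

lemma Vsp_support:
  assumes "v \<in> Vsp n" "v w \<noteq> 0"
  shows "\<exists>k<n. w = [k]"
proof (rule ccontr)
  obtain c where v: "v = (\<lambda>w. \<Sum>i<n. c i * gen i w)" using assms(1) by (auto simp: Vsp_def)
  assume "\<not> (\<exists>k<n. w = [k])"
  then have "v w = 0" unfolding v by (intro sum.neutral) (auto simp: gen_def)
  then show False using assms(2) by simp
qed

lemma Vsp_length_ne_1: "v \<in> Vsp n \<Longrightarrow> length w \<noteq> 1 \<Longrightarrow> v w = 0"
  using Vsp_support by fastforce

lemma twisted_br_gen_in_closure_br:
  "i < n \<Longrightarrow> j < n
    \<Longrightarrow> twisted_br A B (deg_gen i) (deg_gen j) (gen i) (gen j) \<in> closure_br n p (twisted_br A B)"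
  by (intro closure_br.br_in closure_br.gen_in gen_in_Vsp homog_gen)

lemma tmul_gen_gen: "tmul (gen i) (gen j) w = (if w = [i, j] then 1 else 0)"
proof -
  have "w \<noteq> [] \<and> last w = j \<and> butlast w = [i] \<longleftrightarrow> w = [i, j]"
    by (metis append_butlast_last_id butlast_snoc last_snoc append_Cons append_Nil list.distinct(1))
  then show ?thesis unfolding tmul_gen_right by (auto simp: gen_def)
qed

lemma twisted_br_gen_gen:
  "twisted_br A B \<alpha> \<beta> (gen i) (gen j) w
     = A \<alpha> \<beta> * (if w = [i, j] then 1 else 0) - B \<alpha> \<beta> * (if w = [j, i] then 1 else 0)"
  by (simp add: twisted_br_apply tmul_gen_gen)

lemma closure_br_Nil: "u \<in> closure_br n p (twisted_br A B) \<Longrightarrow> u [] = 0"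
proof (induction rule: closure_br.induct)
  case (gen_in v)
  then show ?case by (simp add: Vsp_length_ne_1)
qed (simp_all add: nichols_ideal_short tadd_def tsmult_def twisted_br_apply tmul_def)

lemma tmul_length2: "u [] = 0 \<Longrightarrow> v [] = 0 \<Longrightarrow> tmul u v [a, b] = u [a] * v [b]"
proof -
  assume "u [] = 0" "v [] = 0"
  moreover have "{..length [a, b]} = {0, 1, 2}" by auto
  ultimately show ?thesis by (simp add: tmul_def)
qed

lemma twisted_br_length2:
  assumes u: "homog n \<alpha> u" "u [] = 0" and v: "homog n \<beta> v" "v [] = 0"
  shows "twisted_br A B \<alpha> \<beta> u v [a, b]
    = A (deg_gen a) (deg_gen b) * (u [a] * v [b]) - B (deg_gen b) (deg_gen a) * (v [a] * u [b])"
proof -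
  have A: "A \<alpha> \<beta> * (u [a] * v [b]) = A (deg_gen a) (deg_gen b) * (u [a] * v [b])"
    using homog_deg_eq_deg_gen[OF u(1), of a] homog_deg_eq_deg_gen[OF v(1), of b] by force
  have B: "B \<alpha> \<beta> * (v [a] * u [b]) = B (deg_gen b) (deg_gen a) * (v [a] * u [b])"
    using homog_deg_eq_deg_gen[OF u(1), of b] homog_deg_eq_deg_gen[OF v(1), of a] by force
  show ?thesis unfolding twisted_br_apply tmul_length2[of u v, OF u(2) v(2)] tmul_length2[of v u, OF v(2) u(2)] A B ..
qed

text \<open>A linear form in the coordinates of \<open>x\<^sub>ix\<^sub>j\<close> and \<open>x\<^sub>jx\<^sub>i\<close> vanishes on a whole closure
  as soon as it vanishes on the ideal and on the brackets of the generators \<open>x\<^sub>i\<close>, \<open>x\<^sub>j\<close>.\<close>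

lemma closure_br_length2_vanishing:
  assumes "u \<in> closure_br n p (twisted_br A B)"
    and ideal: "\<And>z. z \<in> nichols_ideal n p \<Longrightarrow> c * z [i, j] + d * z [j, i] = 0"
    and ij: "c * A (deg_gen i) (deg_gen j) = d * B (deg_gen i) (deg_gen j)"
    and ji: "d * A (deg_gen j) (deg_gen i) = c * B (deg_gen j) (deg_gen i)"
  shows "c * u [i, j] + d * u [j, i] = 0"
  using assms(1)
proof (induction rule: closure_br.induct)
  case (gen_in v)
  then show ?case by (simp add: Vsp_length_ne_1)
next
  case (ideal_in u)
  then show ?case by (rule ideal)
next
  case (add_in u v)
  then show ?case by (simp add: tadd_def algebra_simps)
next
  case (smult_in u a)
  have "c * (a * u [i, j]) + d * (a * u [j, i]) = a * (c * u [i, j] + d * u [j, i])"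
    by (simp add: algebra_simps)
  then show ?case using smult_in.IH by (simp add: tsmult_def)
next
  case (br_in u v \<alpha> \<beta>)
  let ?A = "\<lambda>a b. A (deg_gen a) (deg_gen b)" and ?B = "\<lambda>a b. B (deg_gen a) (deg_gen b)"
  have "c * twisted_br A B \<alpha> \<beta> u v [i, j] + d * twisted_br A B \<alpha> \<beta> u v [j, i]
      = (c * ?A i j - d * ?B i j) * (u [i] * v [j]) + (d * ?A j i - c * ?B j i) * (v [i] * u [j])"
    using br_in.hyps by (simp add: twisted_br_length2 closure_br_Nil algebra_simps)
  then show ?case using ij ji by simp
qed

lemma closure_br_diag_vanishing:
  assumes "u \<in> closure_br n p (twisted_br A B)"
    and AB: "A (deg_gen i) (deg_gen i) = B (deg_gen i) (deg_gen i)"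
  shows "(1 + p i i) * u [i, i] = 0"
  using assms(1)
proof (induction rule: closure_br.induct)
  case (gen_in v)
  then show ?case by (simp add: Vsp_length_ne_1)
next
  case (ideal_in u)
  then show ?case using nichols_ideal_length2[of u n p i i] by (simp add: algebra_simps)
next
  case (add_in u v)
  then show ?case by (simp add: tadd_def algebra_simps)
next
  case (smult_in u a)
  have "(1 + p i i) * (a * u [i, i]) = a * ((1 + p i i) * u [i, i])" by (simp add: algebra_simps)
  then show ?case using smult_in.IH by (simp add: tsmult_def)
next
  case (br_in u v \<alpha> \<beta>)
  then show ?case by (simp add: twisted_br_length2 closure_br_Nil AB)
qed

section \<open>Equal closures force a sign braiding\<close>

definition diagonal_sign_braiding :: "nat \<Rightarrow> (nat \<Rightarrow> nat \<Rightarrow> 'a::field) \<Rightarrow> bool" where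
  "diagonal_sign_braiding n p \<longleftrightarrow>
     (\<forall>i<n. (p i i)\<^sup>2 = 1) \<and> (\<forall>i<n. \<forall>j<n. i \<noteq> j \<longrightarrow> p i j = 1 \<and> p j i = 1)"

lemma LV_length2_vanishing:
  assumes "u \<in> LV n p" "i < n" "j < n" "p i j * p j i = 1"
  shows "u [i, j] + p j i * u [j, i] = 0"
proof -
  have "1 * u [i, j] + p j i * u [j, i] = 0"
  proof (rule closure_br_length2_vanishing[where A = "\<lambda>_ _. 1" and B = "pchar n p"])
    show "u \<in> closure_br n p (twisted_br (\<lambda>_ _. 1) (pchar n p))"
      using assms(1) by (simp add: LV_def braided_br_eq_twisted_br)
  qed (use assms in \<open>simp_all add: pchar_deg_gen nichols_ideal_length2 mult.commute\<close>)
  then show ?thesis by simp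
qed

lemma LV_minus_length2_vanishing:
  assumes "u \<in> LV_minus n p" "p i j * p j i \<noteq> 1"
  shows "u [i, j] + u [j, i] = 0"
proof -
  have "1 * u [i, j] + 1 * u [j, i] = 0"
  proof (rule closure_br_length2_vanishing[where A = "\<lambda>_ _. 1" and B = "\<lambda>_ _. 1"])
    show "u \<in> closure_br n p (twisted_br (\<lambda>_ _. 1) (\<lambda>_ _. 1))"
      using assms(1) by (simp add: LV_minus_def comm_br_eq_twisted_br)
    show "1 * z [i, j] + 1 * z [j, i] = 0" if "z \<in> nichols_ideal n p" for z
      using nichols_ideal_length2_eq_0[OF that, of i j] nichols_ideal_length2_eq_0[OF that, of j i] assms(2)
      by (simp add: mult.commute)
  qed simp_all
  then show ?thesis by simp
qed

lemma LV_L_length2_vanishing: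
  assumes "u \<in> LV_L n p" "i < n" "j < n" "p i j * p j i \<noteq> 1"
  shows "p i j * u [i, j] + p j i * u [j, i] = 0"
proof (rule closure_br_length2_vanishing[where A = "\<lambda>\<alpha> \<beta>. pchar n p \<beta> \<alpha>" and B = "pchar n p"])
  show "u \<in> closure_br n p (twisted_br (\<lambda>\<alpha> \<beta>. pchar n p \<beta> \<alpha>) (pchar n p))"
    using assms(1) by (simp add: LV_L_def L_br_eq_twisted_br)
  show "p i j * z [i, j] + p j i * z [j, i] = 0" if "z \<in> nichols_ideal n p" for z
    using nichols_ideal_length2_eq_0[OF that, of i j] nichols_ideal_length2_eq_0[OF that, of j i] assms(4)
    by (simp add: mult.commute)
qed (use assms in \<open>simp_all add: pchar_deg_gen mult.commute\<close>)

lemma twisted_br_gen_gen_eq_0: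
  "w \<noteq> [i, j] \<Longrightarrow> w \<noteq> [j, i] \<Longrightarrow> twisted_br A B \<alpha> \<beta> (gen i) (gen j) w = 0"
  by (simp add: twisted_br_gen_gen)

lemma twisted_br_gen_gen_off_diag:
  assumes "i \<noteq> j"
  shows "twisted_br A B \<alpha> \<beta> (gen i) (gen j) [i, j] = A \<alpha> \<beta>"
    and "twisted_br A B \<alpha> \<beta> (gen i) (gen j) [j, i] = - B \<alpha> \<beta>"
  using assms by (simp_all add: twisted_br_gen_gen)

lemma diag_sq_eq_1_of_LV_subset:
  assumes sub: "LV n p \<subseteq> closure_br n p (twisted_br A B)" and i: "i < n"
    and AB: "A (deg_gen i) (deg_gen i) = B (deg_gen i) (deg_gen i)"
  shows "(p i i)\<^sup>2 = 1"
proof -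
  let ?X = "twisted_br (\<lambda>_ _. 1) (pchar n p) (deg_gen i) (deg_gen i) (gen i) (gen i)"
  have "?X \<in> closure_br n p (twisted_br A B)"
    using sub twisted_br_gen_in_closure_br[OF i i] by (auto simp: LV_def braided_br_eq_twisted_br)
  then have "(1 + p i i) * ?X [i, i] = 0" using AB by (rule closure_br_diag_vanishing)
  moreover have "?X [i, i] = 1 - p i i" using i by (simp add: twisted_br_gen_gen pchar_deg_gen)
  ultimately show ?thesis by (simp add: power2_eq_square algebra_simps)
qed

lemma braided_gen_br_in_LV:
  "i < n \<Longrightarrow> j < n \<Longrightarrow> twisted_br (\<lambda>_ _. 1) (pchar n p) (deg_gen i) (deg_gen j) (gen i) (gen j) \<in> LV n p"
  unfolding LV_def braided_br_eq_twisted_br by (rule twisted_br_gen_in_closure_br)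

lemma off_diag_of_LV_eq_LV_minus:
  assumes eq: "LV n p = LV_minus n p" and i: "i < n" and j: "j < n" and ij: "i \<noteq> j"
  shows "p i j = 1"
proof -
  let ?X = "\<lambda>a b. twisted_br (\<lambda>_ _. 1) (pchar n p) (deg_gen a) (deg_gen b) (gen a) (gen b)"
  have X: "?X a b \<in> LV_minus n p" "?X a b [a, b] = 1" "?X a b [b, a] = - p a b"
    if "a < n" "b < n" "a \<noteq> b" for a b
    using that braided_gen_br_in_LV[of a n b p] eq by (simp_all add: twisted_br_gen_gen pchar_deg_gen)
  have prod: "p i j * p j i = 1"
  proof (rule ccontr)
    assume ne: "p i j * p j i \<noteq> 1"
    have "p i j = 1" using LV_minus_length2_vanishing[OF X(1)[OF i j ij] ne] X[OF i j ij] by simp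
    moreover have "p j i = 1"
      using LV_minus_length2_vanishing[OF X(1)[OF j i ij[symmetric]], of j i] ne X[OF j i ij[symmetric]]
      by (simp add: mult.commute)
    ultimately show False using ne by simp
  qed
  let ?Y = "twisted_br (\<lambda>_ _. 1) (\<lambda>_ _. 1) (deg_gen i) (deg_gen j) (gen i) (gen j)"
  have "?Y \<in> LV n p"
    using eq twisted_br_gen_in_closure_br[OF i j] by (simp add: LV_minus_def comm_br_eq_twisted_br)
  then have "?Y [i, j] + p j i * ?Y [j, i] = 0" using i j prod by (rule LV_length2_vanishing)
  then have "p j i = 1" using ij by (simp add: twisted_br_gen_gen_off_diag)
  then show ?thesis using prod by simp
qed

lemma off_diag_of_LV_eq_LV_L:
  assumes eq: "LV n p = LV_L n p" and i: "i < n" and j: "j < n" and ij: "i \<noteq> j"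
    and nz: "p i j \<noteq> 0" "p j i \<noteq> 0"
  shows "p i j = 1"
proof -
  let ?X = "\<lambda>a b. twisted_br (\<lambda>_ _. 1) (pchar n p) (deg_gen a) (deg_gen b) (gen a) (gen b)"
  have X: "?X a b \<in> LV_L n p" "?X a b [a, b] = 1" "?X a b [b, a] = - p a b"
    if "a < n" "b < n" "a \<noteq> b" for a b
    using that braided_gen_br_in_LV[of a n b p] eq by (simp_all add: twisted_br_gen_gen pchar_deg_gen)
  have prod: "p i j * p j i = 1"
  proof (rule ccontr)
    assume ne: "p i j * p j i \<noteq> 1"
    have "p i j * (1 - p j i) = 0"
      using LV_L_length2_vanishing[OF X(1)[OF i j ij] i j ne] X[OF i j ij] by (simp add: algebra_simps)
    moreover have "p j i * (1 - p i j) = 0"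
      using LV_L_length2_vanishing[OF X(1)[OF j i ij[symmetric]] j i] ne X[OF j i ij[symmetric]]
      by (simp add: algebra_simps)
    ultimately show False using ne nz by simp
  qed
  let ?Y = "twisted_br (\<lambda>\<alpha> \<beta>. pchar n p \<beta> \<alpha>) (pchar n p) (deg_gen i) (deg_gen j) (gen i) (gen j)"
  have "?Y \<in> LV n p"
    using eq twisted_br_gen_in_closure_br[OF i j] by (simp add: LV_L_def L_br_eq_twisted_br)
  then have "?Y [i, j] + p j i * ?Y [j, i] = 0" using i j prod by (rule LV_length2_vanishing)
  then have "p j i * (1 - p i j) = 0"
    using i j ij by (simp add: twisted_br_gen_gen_off_diag pchar_deg_gen algebra_simps)
  then show ?thesis using nz by simp
qed

lemma diagonal_sign_braiding_of_LV_eq_LV_minus: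
  assumes "LV n p = LV_minus n p"
  shows "diagonal_sign_braiding n p"
  unfolding diagonal_sign_braiding_def
proof (intro conjI allI impI)
  show "(p i i)\<^sup>2 = 1" if "i < n" for i
    using assms that by (intro diag_sq_eq_1_of_LV_subset[where A = "\<lambda>_ _. 1" and B = "\<lambda>_ _. 1"])
      (simp_all add: LV_minus_def comm_br_eq_twisted_br)
  show "p i j = 1" "p j i = 1" if "i < n" "j < n" "i \<noteq> j" for i j
    using that off_diag_of_LV_eq_LV_minus[OF assms] by auto
qed

lemma diagonal_sign_braiding_of_LV_eq_LV_L:
  assumes "LV n p = LV_L n p" and nz: "\<forall>i<n. \<forall>j<n. p i j \<noteq> 0"
  shows "diagonal_sign_braiding n p"
  unfolding diagonal_sign_braiding_def
proof (intro conjI allI impI)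
  show "(p i i)\<^sup>2 = 1" if "i < n" for i
    using assms that by (intro diag_sq_eq_1_of_LV_subset[where A = "\<lambda>\<alpha> \<beta>. pchar n p \<beta> \<alpha>" and B = "pchar n p"])
      (simp_all add: LV_L_def L_br_eq_twisted_br)
  show "p i j = 1" "p j i = 1" if "i < n" "j < n" "i \<noteq> j" for i j
    using that nz off_diag_of_LV_eq_LV_L[OF assms(1)] by auto
qed

section \<open>The closures of a sign braiding\<close>

lemma tensor_Vsp: "v \<in> Vsp n \<Longrightarrow> tensor n v"
proof -
  assume v: "v \<in> Vsp n"
  then have "{w. v w \<noteq> 0} \<subseteq> (\<lambda>k. [k]) ` {..<n}" using Vsp_support by blast
  then show ?thesis unfolding tensor_def by (auto intro: finite_subset)
qed

lemma tensor_V_mod: "u \<in> V_mod n p \<Longrightarrow> tensor n u"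
  unfolding V_mod_def using tensor_tadd tensor_Vsp nichols_ideal_tensor by blast

lemma V_modI: "z \<in> nichols_ideal n p \<Longrightarrow> tadd (\<lambda>w. \<Sum>i<n. c i * gen i w) z \<in> V_mod n p"
  unfolding V_mod_def Vsp_def by blast

lemma Vsp_subset_V_mod: "v \<in> Vsp n \<Longrightarrow> v \<in> V_mod n p"
  unfolding V_mod_def using nichols_ideal_zero by (force simp: tadd_def)

lemma nichols_ideal_subset_V_mod: "z \<in> nichols_ideal n p \<Longrightarrow> z \<in> V_mod n p"
proof -
  assume "z \<in> nichols_ideal n p"
  moreover have "(\<lambda>_. 0) \<in> Vsp n" unfolding Vsp_def by (intro CollectI exI[of _ "\<lambda>_. 0"]) simp
  ultimately show ?thesis unfolding V_mod_def by (force simp: tadd_def)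
qed

lemma V_mod_tadd:
  assumes "u \<in> V_mod n p" "v \<in> V_mod n p"
  shows "tadd u v \<in> V_mod n p"
proof -
  obtain c z c' z' where u: "u = tadd (\<lambda>w. \<Sum>i<n. c i * gen i w) z" "z \<in> nichols_ideal n p"
    and v: "v = tadd (\<lambda>w. \<Sum>i<n. c' i * gen i w) z'" "z' \<in> nichols_ideal n p"
    using assms by (auto simp: V_mod_def Vsp_def)
  have "tadd u v = tadd (\<lambda>w. \<Sum>i<n. (c i + c' i) * gen i w) (tadd z z')"
    by (rule ext) (simp add: u v tadd_def sum.distrib algebra_simps)
  then show ?thesis using V_modI[OF nichols_ideal_tadd[OF u(2) v(2)]] by simp
qed

lemma V_mod_tsmult:
  assumes "u \<in> V_mod n p"
  shows "tsmult a u \<in> V_mod n p"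
proof -
  obtain c z where u: "u = tadd (\<lambda>w. \<Sum>i<n. c i * gen i w) z" "z \<in> nichols_ideal n p"
    using assms by (auto simp: V_mod_def Vsp_def)
  have "tsmult a u = tadd (\<lambda>w. \<Sum>i<n. (a * c i) * gen i w) (tsmult a z)"
    by (rule ext) (simp add: u tadd_def tsmult_def sum_distrib_left algebra_simps)
  then show ?thesis using V_modI[OF nichols_ideal_tsmult[OF u(2)]] by simp
qed

lemma V_mod_homog_cases:
  assumes u: "u \<in> V_mod n p" and h: "homog n \<alpha> u"
  shows "u \<in> nichols_ideal n p \<or> (\<exists>i<n. \<alpha> = deg_gen i \<and> u = tsmult (u [i]) (gen i))"
proof -
  obtain c z where uz: "u = tadd (\<lambda>w. \<Sum>i<n. c i * gen i w) z" and z: "z \<in> nichols_ideal n p"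
    using u by (auto simp: V_mod_def Vsp_def)
  show ?thesis
  proof (cases "\<exists>i<n. c i \<noteq> 0")
    case False
    then have "u = z" unfolding uz by (intro ext) (simp add: tadd_def)
    then show ?thesis using z by simp
  next
    case True
    then obtain i where i: "i < n" "c i \<noteq> 0" by auto
    have "u [i] = c i"
      using i nichols_ideal_short[OF z, of "[i]"] by (simp add: uz tadd_def gen_def if_distrib cong: if_cong)
    then have "u [i] \<noteq> 0" using i by simp
    then have \<alpha>: "\<alpha> = deg_gen i" by (rule homog_deg_eq_deg_gen[OF h])
    have "u = tsmult (u [i]) (gen i)"
    proof
      fix w
      show "u w = tsmult (u [i]) (gen i) w"
        using homog_deg_gen_support[OF h[unfolded \<alpha>], of w] by (cases "w = [i]") (auto simp: tsmult_def gen_def)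
    qed
    then show ?thesis using i \<alpha> by blast
  qed
qed

lemma twisted_br_V_mod_in_nichols_ideal:
  assumes gens: "\<And>i j. i < n \<Longrightarrow> j < n
      \<Longrightarrow> twisted_br A B (deg_gen i) (deg_gen j) (gen i) (gen j) \<in> nichols_ideal n p"
    and u: "u \<in> V_mod n p" "homog n \<alpha> u" and v: "v \<in> V_mod n p" "homog n \<beta> v"
  shows "twisted_br A B \<alpha> \<beta> u v \<in> nichols_ideal n p"
proof -
  consider "u \<in> nichols_ideal n p" | "v \<in> nichols_ideal n p"
    | i j where "i < n" "\<alpha> = deg_gen i" "u = tsmult (u [i]) (gen i)"
        "j < n" "\<beta> = deg_gen j" "v = tsmult (v [j]) (gen j)"
    using V_mod_homog_cases[OF u] V_mod_homog_cases[OF v] by blast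
  then show ?thesis
  proof cases
    case 1
    then show ?thesis using tensor_V_mod[OF v(1)] by (rule twisted_br_nichols_ideal_left)
  next
    case 2
    then show ?thesis using tensor_V_mod[OF u(1)] by (rule twisted_br_nichols_ideal_right)
  next
    case (3 i j)
    then have "twisted_br A B \<alpha> \<beta> u v = tsmult (u [i] * v [j]) (twisted_br A B (deg_gen i) (deg_gen j) (gen i) (gen j))"
      by (metis twisted_br_tsmult_tsmult)
    then show ?thesis using gens[OF 3(1,4)] by (simp add: nichols_ideal_tsmult)
  qed
qed

lemma closure_br_eq_V_mod:
  assumes gens: "\<And>i j. i < n \<Longrightarrow> j < n
      \<Longrightarrow> twisted_br A B (deg_gen i) (deg_gen j) (gen i) (gen j) \<in> nichols_ideal n p"
  shows "closure_br n p (twisted_br A B) = V_mod n p"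
proof
  show "closure_br n p (twisted_br A B) \<subseteq> V_mod n p"
  proof
    fix u assume "u \<in> closure_br n p (twisted_br A B)"
    then show "u \<in> V_mod n p"
    proof (induction rule: closure_br.induct)
      case (br_in u v \<alpha> \<beta>)
      then show ?case
        by (blast intro: nichols_ideal_subset_V_mod twisted_br_V_mod_in_nichols_ideal[OF gens])
    qed (simp_all add: Vsp_subset_V_mod nichols_ideal_subset_V_mod V_mod_tadd V_mod_tsmult)
  qed
  show "V_mod n p \<subseteq> closure_br n p (twisted_br A B)"
    by (auto simp: V_mod_def intro: closure_br.intros)
qed

lemma twisted_br_gen_in_nichols_ideal:
  assumes i: "i < n" and j: "j < n"
    and off: "i \<noteq> j \<Longrightarrow> A (deg_gen i) (deg_gen j) = p j i * B (deg_gen i) (deg_gen j)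
        \<and> B (deg_gen i) (deg_gen j) = p i j * A (deg_gen i) (deg_gen j)"
    and diag: "i = j \<Longrightarrow> (A (deg_gen i) (deg_gen i) - B (deg_gen i) (deg_gen i)) * (1 + p i i) = 0"
  shows "twisted_br A B (deg_gen i) (deg_gen j) (gen i) (gen j) \<in> nichols_ideal n p"
proof (rule nichols_idealI_length2)
  let ?X = "twisted_br A B (deg_gen i) (deg_gen j) (gen i) (gen j)"
  have supp: "{w. ?X w \<noteq> 0} \<subseteq> {[i, j], [j, i]}" using twisted_br_gen_gen_eq_0 by blast
  then show "tensor n ?X" using i j by (auto simp: tensor_def intro: finite_subset)
  show "length w = 2" if "?X w \<noteq> 0" for w using supp that by auto
  show "?X [a, b] + p b a * ?X [b, a] = 0" for a b
  proof -
    consider "a = i" "b = j" | "a = j" "b = i" "i \<noteq> j" | "\<not> (a = i \<and> b = j)" "\<not> (a = j \<and> b = i)"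
      by blast
    then show ?thesis
    proof cases
      case 1
      show ?thesis
      proof (cases "i = j")
        case True
        then show ?thesis using 1 diag by (simp add: twisted_br_gen_gen algebra_simps)
      next
        case False
        then show ?thesis using 1 conjunct1[OF off[OF False]] by (simp add: twisted_br_gen_gen_off_diag)
      qed
    next
      case 2
      then show ?thesis using conjunct2[OF off[OF 2(3)]] by (simp add: twisted_br_gen_gen_off_diag)
    next
      case 3
      then have "[a, b] \<notin> {[i, j], [j, i]}" "[b, a] \<notin> {[i, j], [j, i]}" by auto
      then show ?thesis by (simp add: twisted_br_gen_gen_eq_0)
    qed
  qed
qed

lemma closures_eq_V_mod:
  assumes "diagonal_sign_braiding n p"
  shows "LV n p = V_mod n p" "LV_L n p = V_mod n p" "LV_minus n p = V_mod n p"
proof -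
  have diag: "(1 - p i i) * (1 + p i i) = 0" and off: "i \<noteq> j \<Longrightarrow> p i j = 1 \<and> p j i = 1"
    if "i < n" "j < n" for i j
    using assms that by (auto simp: diagonal_sign_braiding_def algebra_simps power2_eq_square)
  show "LV n p = V_mod n p" unfolding LV_def braided_br_eq_twisted_br
    by (intro closure_br_eq_V_mod twisted_br_gen_in_nichols_ideal) (auto simp: pchar_deg_gen diag off)
  show "LV_L n p = V_mod n p" unfolding LV_L_def L_br_eq_twisted_br
    by (intro closure_br_eq_V_mod twisted_br_gen_in_nichols_ideal) (auto simp: pchar_deg_gen off)
  show "LV_minus n p = V_mod n p" unfolding LV_minus_def comm_br_eq_twisted_br
    by (intro closure_br_eq_V_mod twisted_br_gen_in_nichols_ideal) (auto simp: off)
qed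

theorem proposition5p2:
  fixes n :: nat and p :: "nat \<Rightarrow> nat \<Rightarrow> 'a::field_char_0"
  assumes "\<forall>i<n. \<forall>j<n. p i j \<noteq> 0"
  shows "(LV n p = LV_L n p \<longleftrightarrow> LV n p = LV_minus n p)
    \<and> (LV n p = LV_minus n p \<longleftrightarrow>
         ((\<forall>i<n. (p i i)\<^sup>2 = 1) \<and> (\<forall>i<n. \<forall>j<n. i \<noteq> j \<longrightarrow> p i j = 1 \<and> p j i = 1)))
    \<and> (((\<forall>i<n. (p i i)\<^sup>2 = 1) \<and> (\<forall>i<n. \<forall>j<n. i \<noteq> j \<longrightarrow> p i j = 1 \<and> p j i = 1))
         \<longrightarrow> LV n p = LV_L n p \<and> LV_L n p = V_mod n p)"
proof -
  have minus: "LV n p = LV_minus n p \<longleftrightarrow> diagonal_sign_braiding n p"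
  proof
    show "diagonal_sign_braiding n p" if "LV n p = LV_minus n p"
      using that by (rule diagonal_sign_braiding_of_LV_eq_LV_minus)
    show "LV n p = LV_minus n p" if "diagonal_sign_braiding n p"
      using closures_eq_V_mod[OF that] by simp
  qed
  have L: "LV n p = LV_L n p \<longleftrightarrow> diagonal_sign_braiding n p"
  proof
    show "diagonal_sign_braiding n p" if "LV n p = LV_L n p"
      using that assms by (rule diagonal_sign_braiding_of_LV_eq_LV_L)
    show "LV n p = LV_L n p" if "diagonal_sign_braiding n p"
      using closures_eq_V_mod[OF that] by simp
  qed
  show ?thesis
    unfolding diagonal_sign_braiding_def[symmetric] using minus L closures_eq_V_mod(2) by blast
qed

end
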